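(* For each $n$ let $0<p_n,q_n\le 1$ with $\frac{p_nq_n^2n}{\log n}\to\infty$ as $n\to\infty$, and let $\alpha^{(0)}$ be an initial configuration of $n$ cards. For $k\ge 1$ let $\alpha^{(k)}_1$ denote the size of the pile newly formed in the $k$-th move of $\mathscr{B}(n,p_n,q_n)$ (possibly $0$). Put $D=\lceil 14\log n/(p_nq_n)\rceil$ and $M=\lceil n^2/p_n\rceil$. Then \[ \max_{k\in[D+1,D+M]}\frac{|\alpha^{(k)}_1-p_nq_nn|}{p_nq_nn}\to 0\quad\text{in probability as } n\to\infty. \]
   Context: $\mathscr{B}(n,p,q)$ ($0<p,q\le 1$) is $p$-random $q$-proportion Bulgarian solitaire on $n$ identical cards distributed in piles. In one move, from each pile of size $h$ the top $\lceil qh\rceil$ cards are candidates; each candidate card is picked with probability $p$, independently of all other candidates; the picked cards are removed and together form one new pile. *)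

theory Defs
  imports "HOL-Probability.Probability_Mass_Function"
begin

text \<open>A configuration of cards is a list of pile sizes (all positive); the order of
the piles is irrelevant.\<close>

fun bs_draws :: "real \<Rightarrow> real \<Rightarrow> nat list \<Rightarrow> nat list pmf" where
  "bs_draws p q [] = return_pmf []"
| "bs_draws p q (h # hs) =
     bind_pmf (binomial_pmf (nat \<lceil>q * real h\<rceil>) p) (\<lambda>x.
     bind_pmf (bs_draws p q hs) (\<lambda>xs. return_pmf (x # xs)))"

definition bs_step :: "real \<Rightarrow> real \<Rightarrow> nat list \<Rightarrow> (nat list \<times> nat) pmf" where
  "bs_step p q \<alpha> = map_pmf (\<lambda>xs.
      let new = sum_list xs;
          rest = filter (\<lambda>h. 0 < h) (map2 (-) \<alpha> xs)
      in ((if 0 < new then new # rest else rest), new)) (bs_draws p q \<alpha>)"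

fun bs_newpiles :: "real \<Rightarrow> real \<Rightarrow> nat list \<Rightarrow> nat \<Rightarrow> nat list pmf" where
  "bs_newpiles p q \<alpha> 0 = return_pmf []"
| "bs_newpiles p q \<alpha> (Suc m) =
     bind_pmf (bs_step p q \<alpha>) (\<lambda>(\<alpha>', s).
     bind_pmf (bs_newpiles p q \<alpha>' m) (\<lambda>ss. return_pmf (s # ss)))"

end

theory Submission
  imports Defs
begin

text \<open>Keep empty piles and put every new pile in front, so that position \<open>i\<close> holds the pile formed
  \<open>i\<close> moves ago.  In one move every pile loses in expectation at least a fraction \<open>p q\<close> of its
  cards, so after \<open>D\<close> moves the expected number of cards outside the \<open>D\<close> youngest piles is at
  most \<open>(1 - p q)\<^sup>D n \<le> 1 / n\<^sup>1\<^sup>3\<close>.  If all cards lie in the \<open>D\<close> youngest piles, the next new pile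
  is \<open>Binomial(C, p)\<close> with \<open>q n \<le> C \<le> q n + D\<close>; as \<open>p D\<close> is small compared with \<open>p q n\<close>, a
  multiplicative Chernoff bound makes a relative deviation above \<open>\<epsilon>\<close> have probability at most
  \<open>2 / n\<^sup>4\<close>.  A union bound over the \<open>M \<le> 2 n\<^sup>3\<close> moves gives a failure probability \<open>O(1/n)\<close>.\<close>

section \<open>General facts on probability mass functions and the binomial distribution\<close>

lemma nn_integral_pmf_const: "(\<integral>\<^sup>+x. c \<partial>measure_pmf M) = c"
  by (simp add: measure_pmf.emeasure_space_1)

lemma nn_integral_pmf_add:
  "(\<integral>\<^sup>+x. f x + g x \<partial>measure_pmf M) = (\<integral>\<^sup>+x. f x \<partial>measure_pmf M) + (\<integral>\<^sup>+x. g x \<partial>measure_pmf M)"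
  by (rule nn_integral_add) auto

lemma nn_integral_pmf_cmult:
  "(\<integral>\<^sup>+x. c * f x \<partial>measure_pmf M) = c * (\<integral>\<^sup>+x. f x \<partial>measure_pmf M)"
  by (rule nn_integral_cmult) auto

lemma nn_integral_pmf_mono:
  "(\<And>x. x \<in> set_pmf M \<Longrightarrow> f x \<le> g x) \<Longrightarrow> (\<integral>\<^sup>+x. f x \<partial>measure_pmf M) \<le> (\<integral>\<^sup>+x. g x \<partial>measure_pmf M)"
  by (rule nn_integral_mono_AE) (simp add: AE_measure_pmf_iff)

lemma nn_integral_pmf_cong:
  "(\<And>x. x \<in> set_pmf M \<Longrightarrow> f x = g x) \<Longrightarrow> (\<integral>\<^sup>+x. f x \<partial>measure_pmf M) = (\<integral>\<^sup>+x. g x \<partial>measure_pmf M)"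
  by (rule nn_integral_cong_AE) (simp add: AE_measure_pmf_iff)

lemma set_pmf_binomial_le: "p \<in> {0..1} \<Longrightarrow> x \<in> set_pmf (binomial_pmf n p) \<Longrightarrow> x \<le> n"
  by (auto simp: set_pmf_binomial_eq split: if_splits)

lemma binomial_pmf_add:
  assumes "p \<in> {0..1}"
  shows "binomial_pmf (m + n) p = bind_pmf (binomial_pmf m p) (\<lambda>x. map_pmf (\<lambda>y. x + y) (binomial_pmf n p))"
proof (induction m)
  case 0
  then show ?case using assms by (simp add: binomial_pmf_0 bind_return_pmf map_pmf_def bind_return_pmf')
next
  case (Suc m)
  then show ?case
    using assms by (simp add: binomial_pmf_Suc bind_assoc_pmf bind_return_pmf map_pmf_def add.assoc)
qed

lemma nn_integral_binomial_diff:
  assumes "p \<in> {0..1}" "real n \<le> a"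
  shows "(\<integral>\<^sup>+x. ennreal (a - real x) \<partial>binomial_pmf n p) = ennreal (a - real n * p)"
  using assms(2)
proof (induction n arbitrary: a)
  case 0
  then show ?case using assms(1) by (simp add: binomial_pmf_0)
next
  case (Suc n)
  have p: "0 \<le> p" "p \<le> 1" using assms(1) by auto
  have "real n * p \<le> real n" using p by (simp add: mult_right_le_one_le)
  then have nonneg: "0 \<le> (a - 1) - real n * p" "0 \<le> a - real n * p" using Suc.prems by auto
  have "(\<integral>\<^sup>+x. ennreal (a - real x) \<partial>binomial_pmf (Suc n) p) =
     (\<integral>\<^sup>+x. ennreal ((a - 1) - real x) \<partial>binomial_pmf n p) * ennreal p +
     (\<integral>\<^sup>+x. ennreal (a - real x) \<partial>binomial_pmf n p) * ennreal (1 - p)"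
    using p by (simp add: binomial_pmf_Suc[OF assms(1)] algebra_simps)
  also have "\<dots> = ennreal (((a - 1) - real n * p) * p + (a - real n * p) * (1 - p))"
    using Suc.IH[of "a - 1"] Suc.IH[of a] Suc.prems nonneg p by (simp add: ennreal_mult'')
  also have "((a - 1) - real n * p) * p + (a - real n * p) * (1 - p) = a - real (Suc n) * p"
    by (simp add: algebra_simps)
  finally show ?case .
qed

lemma nn_integral_exp_binomial:
  assumes "p \<in> {0..1}"
  shows "(\<integral>\<^sup>+x. ennreal (exp (t * real x)) \<partial>binomial_pmf n p) = ennreal ((1 - p + p * exp t) ^ n)"
proof (induction n)
  case 0
  then show ?case using assms by (simp add: binomial_pmf_0)
next
  case (Suc n)
  have p: "0 \<le> p" "p \<le> 1" using assms by auto
  have base: "0 \<le> 1 - p + p * exp t" using p by (simp add: add_nonneg_nonneg)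
  have "(\<integral>\<^sup>+x. ennreal (exp (t * real x)) \<partial>binomial_pmf (Suc n) p) =
     (\<integral>\<^sup>+x. ennreal (exp t) * ennreal (exp (t * real x)) \<partial>binomial_pmf n p) * ennreal p +
     (\<integral>\<^sup>+x. ennreal (exp (t * real x)) \<partial>binomial_pmf n p) * ennreal (1 - p)"
    using p by (simp add: binomial_pmf_Suc[OF assms] algebra_simps exp_add flip: ennreal_mult)
  also have "\<dots> = ennreal ((exp t * (1 - p + p * exp t) ^ n) * p + (1 - p + p * exp t) ^ n * (1 - p))"
    unfolding nn_integral_pmf_cmult Suc.IH using p base by (simp add: ennreal_mult'' ennreal_mult)
  also have "(exp t * (1 - p + p * exp t) ^ n) * p + (1 - p + p * exp t) ^ n * (1 - p) =
      (1 - p + p * exp t) ^ Suc n"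
    by (simp add: algebra_simps)
  finally show ?case .
qed

lemma nn_integral_exp_binomial_le:
  assumes "p \<in> {0..1}"
  shows "(\<integral>\<^sup>+x. ennreal (exp (t * (real x - a))) \<partial>binomial_pmf n p)
     \<le> ennreal (exp ((exp t - 1) * (real n * p) - t * a))"
proof -
  have base: "0 \<le> 1 - p + p * exp t" using assms by (simp add: add_nonneg_nonneg)
  have "(\<integral>\<^sup>+x. ennreal (exp (t * (real x - a))) \<partial>binomial_pmf n p) =
      ennreal (exp (- t * a)) * (\<integral>\<^sup>+x. ennreal (exp (t * real x)) \<partial>binomial_pmf n p)"
    unfolding nn_integral_pmf_cmult[symmetric]
    by (simp add: algebra_simps flip: ennreal_mult exp_add)
  also have "\<dots> = ennreal (exp (- t * a) * (1 - p + p * exp t) ^ n)"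
    using assms base by (simp add: nn_integral_exp_binomial ennreal_mult)
  also have "\<dots> \<le> ennreal (exp (- t * a) * exp (p * (exp t - 1)) ^ n)"
    using base exp_ge_add_one_self[of "p * (exp t - 1)"]
    by (intro ennreal_leI mult_left_mono power_mono) (auto simp: algebra_simps)
  also have "\<dots> = ennreal (exp ((exp t - 1) * (real n * p) - t * a))"
    by (simp add: algebra_simps flip: exp_of_nat_mult exp_add)
  finally show ?thesis .
qed

lemma exp_minus_le:
  fixes t :: real
  assumes "0 \<le> t" "t \<le> 1"
  shows "exp (- t) \<le> 1 - t + t\<^sup>2"
proof -
  have "1 \<le> (1 - t + t\<^sup>2) * (1 + t)"
    using assms by (simp add: algebra_simps power2_eq_square power3_eq_cube)
  also have "\<dots> \<le> (1 - t + t\<^sup>2) * exp t"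
    using assms exp_ge_add_one_self[of t] mult_left_le_one_le[of t t]
    by (intro mult_left_mono) (auto simp: power2_eq_square)
  finally show ?thesis by (simp add: exp_minus field_simps)
qed

lemma indicator_deviation_le_exp:
  fixes t d \<mu> x :: real
  assumes "0 \<le> t"
  shows "indicator {x. d * \<mu> \<le> \<bar>x - \<mu>\<bar>} x
    \<le> ennreal (exp (t * (x - (1 + d) * \<mu>))) + ennreal (exp ((- t) * (x - (1 - d) * \<mu>)))"
proof -
  have one_le: "1 \<le> ennreal a + ennreal b" if "1 \<le> a \<or> 1 \<le> b" for a b :: real
    using that ennreal_leI[of 1] by (auto intro: add_increasing add_increasing2)
  have "1 \<le> exp (t * (x - (1 + d) * \<mu>)) \<or> 1 \<le> exp ((- t) * (x - (1 - d) * \<mu>))"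
    if "d * \<mu> \<le> \<bar>x - \<mu>\<bar>"
  proof -
    from that have "(1 + d) * \<mu> \<le> x \<or> x \<le> (1 - d) * \<mu>"
      by (auto simp: algebra_simps abs_if split: if_splits)
    then show ?thesis
      using assms unfolding one_le_exp_iff
      by (metis diff_ge_0_iff_ge diff_le_0_iff_le mult_nonneg_nonneg mult_nonpos_nonpos neg_le_0_iff_le)
  qed
  then show ?thesis
    by (cases "d * \<mu> \<le> \<bar>x - \<mu>\<bar>") (simp_all only: indicator_simps one_le zero_le mem_Collect_eq not_False_eq_True)
qed

text \<open>Multiplicative Chernoff bound, via the exponential moments at \<open>\<plusminus>d/2\<close>.\<close>

lemma prob_binomial_relative_deviation_le:
  fixes n :: nat
  assumes p: "p \<in> {0..1}" and d: "0 < d" "d \<le> 1"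
  defines "\<mu> \<equiv> real n * p"
  shows "measure_pmf.prob (binomial_pmf n p) {x. d * \<mu> \<le> \<bar>real x - \<mu>\<bar>} \<le> 2 * exp (- (\<mu> * d\<^sup>2 / 4))"
proof -
  define t where "t = d / 2"
  have t: "0 \<le> t" "t \<le> 1" using d by (auto simp: t_def)
  have \<mu>: "0 \<le> \<mu>" using p by (simp add: \<mu>_def)
  define A where "A = {x. d * \<mu> \<le> \<bar>real x - \<mu>\<bar>}"
  have "emeasure (binomial_pmf n p) A = (\<integral>\<^sup>+x. indicator A x \<partial>binomial_pmf n p)"
    by simp
  also have "\<dots> \<le> (\<integral>\<^sup>+x. ennreal (exp (t * (real x - (1 + d) * \<mu>))) +
       ennreal (exp ((- t) * (real x - (1 - d) * \<mu>))) \<partial>binomial_pmf n p)"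
  proof (rule nn_integral_pmf_mono)
    fix x
    have "indicator A x = (indicator {y. d * \<mu> \<le> \<bar>y - \<mu>\<bar>} (real x) :: ennreal)"
      by (simp add: A_def indicator_def)
    then show "indicator A x \<le> ennreal (exp (t * (real x - (1 + d) * \<mu>))) +
       ennreal (exp ((- t) * (real x - (1 - d) * \<mu>)))"
      using indicator_deviation_le_exp[OF t(1), of d \<mu> "real x"] by simp
  qed
  also have "\<dots> \<le> ennreal (exp ((exp t - 1) * \<mu> - t * ((1 + d) * \<mu>))) +
      ennreal (exp ((exp (- t) - 1) * \<mu> - (- t) * ((1 - d) * \<mu>)))"
    unfolding nn_integral_pmf_add \<mu>_def by (intro add_mono nn_integral_exp_binomial_le p)
  also have "\<dots> \<le> ennreal (exp (- (\<mu> * d\<^sup>2 / 4))) + ennreal (exp (- (\<mu> * d\<^sup>2 / 4)))"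
  proof (intro add_mono ennreal_leI, unfold exp_le_cancel_iff)
    have "(exp t - 1) * \<mu> \<le> (t + t\<^sup>2) * \<mu>"
      using exp_bound[OF t] \<mu> by (intro mult_right_mono) auto
    then show "(exp t - 1) * \<mu> - t * ((1 + d) * \<mu>) \<le> - (\<mu> * d\<^sup>2 / 4)"
      by (simp add: t_def power2_eq_square field_simps)
    have "(exp (- t) - 1) * \<mu> \<le> (- t + t\<^sup>2) * \<mu>"
      using exp_minus_le[OF t] \<mu> by (intro mult_right_mono) auto
    then show "(exp (- t) - 1) * \<mu> - (- t) * ((1 - d) * \<mu>) \<le> - (\<mu> * d\<^sup>2 / 4)"
      by (simp add: t_def power2_eq_square field_simps)
  qed
  also have "\<dots> = ennreal (2 * exp (- (\<mu> * d\<^sup>2 / 4)))"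
    by (simp flip: ennreal_plus)
  finally show ?thesis
    unfolding A_def measure_pmf.emeasure_eq_measure by (simp add: ennreal_le_iff)
qed

section \<open>Bulgarian solitaire with empty piles kept in place\<close>

lemma bs_draws_Cons:
  "bs_draws p q (h # hs) =
     bind_pmf (binomial_pmf (nat \<lceil>q * real h\<rceil>) p) (\<lambda>x. map_pmf ((#) x) (bs_draws p q hs))"
  by (simp add: map_pmf_def)

declare bs_draws.simps(2)[simp del]

lemma map_drop_bs_draws: "map_pmf (drop L) (bs_draws p q g) = bs_draws p q (drop L g)"
proof (induction g arbitrary: L)
  case Nil
  then show ?case by simp
next
  case (Cons h g)
  then show ?case
    by (cases L) (simp_all add: bs_draws_Cons map_bind_pmf map_pmf_comp bind_pmf_const map_pmf_ident)
qed

lemma nat_ceiling_mult_le: "0 \<le> q \<Longrightarrow> q \<le> 1 \<Longrightarrow> nat \<lceil>q * real h\<rceil> \<le> h"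
  by (simp add: mult_left_le_one_le nat_le_iff ceiling_le)

lemma bs_draws_le:
  assumes "p \<in> {0..1}" "0 \<le> q" "q \<le> 1"
  shows "xs \<in> set_pmf (bs_draws p q g) \<Longrightarrow> list_all2 (\<le>) xs g"
proof (induction g arbitrary: xs)
  case Nil
  then show ?case by simp
next
  case (Cons h g)
  then obtain x xs' where xs: "xs = x # xs'" and x: "x \<in> set_pmf (binomial_pmf (nat \<lceil>q * real h\<rceil>) p)"
    and xs': "xs' \<in> set_pmf (bs_draws p q g)"
    by (auto simp: bs_draws_Cons)
  have "x \<le> h"
    using set_pmf_binomial_le[OF assms(1) x] nat_ceiling_mult_le[OF assms(2,3)] by (rule order.trans)
  then show ?case using Cons.IH[OF xs'] xs by simp
qed

definition bs_candidates :: "real \<Rightarrow> nat list \<Rightarrow> nat" where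
  "bs_candidates q g = sum_list (map (\<lambda>h. nat \<lceil>q * real h\<rceil>) g)"

lemma bs_candidates_append: "bs_candidates q (a @ b) = bs_candidates q a + bs_candidates q b"
  by (simp add: bs_candidates_def)

lemma bs_candidates_ge: "0 \<le> q \<Longrightarrow> q * real (sum_list g) \<le> real (bs_candidates q g)"
proof (induction g)
  case Nil
  then show ?case by (simp add: bs_candidates_def)
next
  case (Cons h g)
  then show ?case
    by (simp add: bs_candidates_def distrib_left) (use le_of_int_ceiling[of "q * real h"] in linarith)
qed

lemma bs_candidates_le: "0 \<le> q \<Longrightarrow> real (bs_candidates q g) \<le> q * real (sum_list g) + real (length g)"
proof (induction g)
  case Nil
  then show ?case by (simp add: bs_candidates_def)
next
  case (Cons h g)
  have "real (nat \<lceil>q * real h\<rceil>) \<le> q * real h + 1" using Cons.prems by (simp add: of_nat_nat)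
  with Cons show ?case by (simp add: bs_candidates_def algebra_simps)
qed

lemma bs_candidates_eq_0: "sum_list g = 0 \<Longrightarrow> bs_candidates q g = 0"
  by (induction g) (auto simp: bs_candidates_def)

lemma map_sum_list_bs_draws:
  assumes "p \<in> {0..1}"
  shows "map_pmf sum_list (bs_draws p q g) = binomial_pmf (bs_candidates q g) p"
proof (induction g)
  case Nil
  then show ?case using assms by (simp add: bs_candidates_def binomial_pmf_0)
next
  case (Cons h g)
  have "map_pmf sum_list (bs_draws p q (h # g)) =
      bind_pmf (binomial_pmf (nat \<lceil>q * real h\<rceil>) p) (\<lambda>x. map_pmf (\<lambda>y. x + y) (map_pmf sum_list (bs_draws p q g)))"
    by (simp add: bs_draws_Cons map_bind_pmf map_pmf_comp)
  then show ?case
    using assms by (simp add: Cons.IH bs_candidates_def binomial_pmf_add)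
qed

text \<open>Unlike \<^const>\<open>bs_step\<close>, a move here keeps exhausted piles as zeros and always puts the
  new pile in front, so after \<open>j\<close> moves position \<open>i < j\<close> holds the pile formed \<open>i\<close> moves ago.\<close>

definition bs_next :: "nat list \<Rightarrow> nat list \<Rightarrow> nat list" where
  "bs_next g xs = sum_list xs # map2 (-) g xs"

fun bs_newpiles_zeros :: "real \<Rightarrow> real \<Rightarrow> nat list \<Rightarrow> nat \<Rightarrow> nat list pmf" where
  "bs_newpiles_zeros p q g 0 = return_pmf []"
| "bs_newpiles_zeros p q g (Suc m) = bind_pmf (bs_draws p q g) (\<lambda>xs.
     bind_pmf (bs_newpiles_zeros p q (bs_next g xs) m) (\<lambda>ss. return_pmf (sum_list xs # ss)))"

fun bs_config :: "real \<Rightarrow> real \<Rightarrow> nat list \<Rightarrow> nat \<Rightarrow> nat list pmf" where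
  "bs_config p q g 0 = return_pmf g"
| "bs_config p q g (Suc j) = bind_pmf (bs_config p q g j) (\<lambda>g'. map_pmf (bs_next g') (bs_draws p q g'))"

lemma map_bs_draws_filter_pos:
  assumes p: "p \<in> {0..1}"
  shows "map_pmf (\<lambda>xs. (filter (\<lambda>h. 0 < h) (map2 (-) g xs), sum_list xs)) (bs_draws p q g) =
         map_pmf (\<lambda>xs. (filter (\<lambda>h. 0 < h) (map2 (-) (filter (\<lambda>h. 0 < h) g) xs), sum_list xs))
            (bs_draws p q (filter (\<lambda>h. 0 < h) g))"
proof (induction g)
  case Nil
  then show ?case by simp
next
  case (Cons h g)
  let ?F = "\<lambda>g xs. (filter (\<lambda>h. 0 < h) (map2 (-) g xs), sum_list (xs::nat list))"
  show ?case
  proof (cases "h = 0")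
    case True
    have "map_pmf (?F (h # g)) (bs_draws p q (h # g)) = map_pmf (?F g) (bs_draws p q g)"
      using True p by (simp add: bs_draws_Cons binomial_pmf_0 map_pmf_comp bind_return_pmf)
    then show ?thesis using True Cons.IH by simp
  next
    case False
    then have filter_Cons_pos: "filter (\<lambda>h. 0 < h) (h # g) = h # filter (\<lambda>h. 0 < h) g"
      by simp
    define G where "G = (\<lambda>x (A::nat list, s::nat). (if 0 < h - x then (h - x) # A else A, x + s))"
    have "map_pmf (?F (h # g)) (bs_draws p q (h # g)) =
        bind_pmf (binomial_pmf (nat \<lceil>q * real h\<rceil>) p) (\<lambda>x. map_pmf (G x) (map_pmf (?F g) (bs_draws p q g)))"
      unfolding bs_draws_Cons map_bind_pmf map_pmf_comp
      by (intro bind_pmf_cong refl map_pmf_cong) (simp add: G_def)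
    also have "\<dots> = map_pmf (?F (filter (\<lambda>h. 0 < h) (h # g))) (bs_draws p q (filter (\<lambda>h. 0 < h) (h # g)))"
      using False unfolding Cons.IH filter_Cons_pos bs_draws_Cons map_bind_pmf map_pmf_comp
      by (intro bind_pmf_cong refl map_pmf_cong) (simp add: G_def)
    finally show ?thesis .
  qed
qed

lemma bs_step_filter_pos:
  assumes "p \<in> {0..1}"
  shows "bs_step p q (filter (\<lambda>h. 0 < h) g) =
     map_pmf (\<lambda>xs. (filter (\<lambda>h. 0 < h) (bs_next g xs), sum_list xs)) (bs_draws p q g)"
proof -
  define H where "H = (\<lambda>(A::nat list, s::nat). (if 0 < s then s # A else A, s))"
  have "bs_step p q (filter (\<lambda>h. 0 < h) g) = map_pmf H (map_pmf
      (\<lambda>xs. (filter (\<lambda>h. 0 < h) (map2 (-) (filter (\<lambda>h. 0 < h) g) xs), sum_list xs))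
      (bs_draws p q (filter (\<lambda>h. 0 < h) g)))"
    unfolding bs_step_def map_pmf_comp by (simp add: Let_def H_def)
  also have "\<dots> = map_pmf (\<lambda>xs. (filter (\<lambda>h. 0 < h) (bs_next g xs), sum_list xs)) (bs_draws p q g)"
    unfolding map_bs_draws_filter_pos[OF assms, symmetric] map_pmf_comp
    by (simp add: H_def bs_next_def)
  finally show ?thesis .
qed

lemma bs_newpiles_filter_pos:
  assumes "p \<in> {0..1}"
  shows "bs_newpiles p q (filter (\<lambda>h. 0 < h) g) m = bs_newpiles_zeros p q g m"
  by (induction m arbitrary: g) (simp_all add: bs_step_filter_pos[OF assms] bind_map_pmf)

lemma bs_config_Suc':
  "bs_config p q g (Suc j) = bind_pmf (bs_draws p q g) (\<lambda>xs. bs_config p q (bs_next g xs) j)"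
proof (induction j arbitrary: g)
  case 0
  then show ?case by (simp add: map_pmf_def bind_return_pmf)
next
  case (Suc j)
  then show ?case by (simp only: bs_config.simps(2)[of _ _ _ "Suc j"]) (simp add: bind_assoc_pmf)
qed

lemma nth_bs_newpiles_zeros:
  "j < m \<Longrightarrow> map_pmf (\<lambda>ss. ss ! j) (bs_newpiles_zeros p q g m) =
     bind_pmf (bs_config p q g j) (\<lambda>g'. map_pmf sum_list (bs_draws p q g'))"
proof (induction j arbitrary: g m)
  case 0
  then obtain m' where "m = Suc m'" by (cases m) auto
  then show ?case by (simp add: map_bind_pmf bind_pmf_const) (simp add: map_pmf_def bind_return_pmf)
next
  case (Suc j)
  then obtain m' where m: "m = Suc m'" and "j < m'" by (cases m) auto
  then show ?case
    by (simp add: Suc.IH map_bind_pmf map_pmf_def[symmetric] map_pmf_comp bs_config_Suc' bind_assoc_pmf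
        del: bs_config.simps(2))
qed

lemma sum_list_bs_next: "list_all2 (\<le>) xs g \<Longrightarrow> sum_list (bs_next g xs) = sum_list g"
proof -
  assume "list_all2 (\<le>) xs g"
  then have "sum_list xs + sum_list (map2 (-) g xs) = sum_list g"
    by (induction rule: list_all2_induct) auto
  then show ?thesis by (simp add: bs_next_def)
qed

lemma sum_list_bs_config:
  assumes "p \<in> {0..1}" "0 \<le> q" "q \<le> 1"
  shows "g' \<in> set_pmf (bs_config p q g j) \<Longrightarrow> sum_list g' = sum_list g"
proof (induction j arbitrary: g')
  case 0
  then show ?case by simp
next
  case (Suc j)
  then obtain g1 xs where g1: "g1 \<in> set_pmf (bs_config p q g j)" and xs: "xs \<in> set_pmf (bs_draws p q g1)"
    and "g' = bs_next g1 xs"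
    by auto
  then show ?case using Suc.IH[OF g1] sum_list_bs_next[OF bs_draws_le[OF assms xs]] by simp
qed

section \<open>Old piles are exhausted\<close>

lemma nn_integral_bs_draws_remaining_le:
  assumes p: "0 \<le> p" "p \<le> 1" and q: "0 \<le> q" "q \<le> 1"
  shows "(\<integral>\<^sup>+xs. ennreal (real (sum_list (map2 (-) g xs))) \<partial>bs_draws p q g)
     \<le> ennreal ((1 - p * q) * real (sum_list g))"
proof (induction g)
  case Nil
  then show ?case by simp
next
  case (Cons h g)
  define c where "c = nat \<lceil>q * real h\<rceil>"
  define I where "I = (\<integral>\<^sup>+xs. ennreal (real (sum_list (map2 (-) g xs))) \<partial>bs_draws p q g)"
  have pin: "p \<in> {0..1}" using p by simp
  have ch: "c \<le> h" unfolding c_def using nat_ceiling_mult_le[OF q] .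
  have "(\<integral>\<^sup>+xs. ennreal (real (sum_list (map2 (-) (h # g) xs))) \<partial>bs_draws p q (h # g))
     = (\<integral>\<^sup>+x. (\<integral>\<^sup>+xs. ennreal (real (h - x)) + ennreal (real (sum_list (map2 (-) g xs))) \<partial>bs_draws p q g)
         \<partial>binomial_pmf c p)"
    unfolding bs_draws_Cons c_def by (simp add: map_pmf_def)
  also have "\<dots> = (\<integral>\<^sup>+x. ennreal (real h - real x) \<partial>binomial_pmf c p) + I"
    unfolding nn_integral_pmf_add nn_integral_pmf_const I_def
    by (intro arg_cong[where f="\<lambda>u. u + _"] nn_integral_pmf_cong)
      (metis of_nat_diff le_trans set_pmf_binomial_le[OF pin] ch)
  also have "\<dots> = ennreal (real h - real c * p) + I"
    using nn_integral_binomial_diff[OF pin, of c "real h"] ch by simp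
  also have "\<dots> \<le> ennreal ((1 - p * q) * real h) + ennreal ((1 - p * q) * real (sum_list g))"
  proof (rule add_mono)
    have "q * real h \<le> real c" unfolding c_def by linarith
    from mult_left_mono[OF this p(1)] have "real h - real c * p \<le> (1 - p * q) * real h"
      by (simp add: algebra_simps)
    then show "ennreal (real h - real c * p) \<le> ennreal ((1 - p * q) * real h)"
      by (rule ennreal_leI)
    show "I \<le> ennreal ((1 - p * q) * real (sum_list g))"
      using Cons.IH unfolding I_def .
  qed
  also have "\<dots> = ennreal ((1 - p * q) * real (sum_list (h # g)))"
    using p q by (simp add: mult_le_one distrib_left flip: ennreal_plus)
  finally show ?case .
qed

text \<open>The cards lying in piles formed at least \<open>L\<close> moves ago: a pile at position \<open>L + 1\<close> was at
  position \<open>L\<close> one move earlier and lost in expectation at least a fraction \<open>p q\<close> of its cards.\<close>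

lemma nn_integral_old_cards_bs_config_le:
  assumes p: "0 \<le> p" "p \<le> 1" and q: "0 \<le> q" "q \<le> 1"
  shows "L \<le> j \<Longrightarrow> (\<integral>\<^sup>+g'. ennreal (real (sum_list (drop L g'))) \<partial>bs_config p q g j)
     \<le> ennreal ((1 - p * q) ^ L * real (sum_list g))"
proof (induction L arbitrary: j)
  case 0
  have "(\<integral>\<^sup>+g'. ennreal (real (sum_list (drop 0 g'))) \<partial>bs_config p q g j) =
      (\<integral>\<^sup>+g'. ennreal (real (sum_list g)) \<partial>bs_config p q g j)"
    by (rule nn_integral_pmf_cong) (use sum_list_bs_config p q in auto)
  then show ?case by (simp add: nn_integral_pmf_const)
next
  case (Suc L)
  then obtain j' where j: "j = Suc j'" and L: "L \<le> j'" by (cases j) auto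
  have pq: "0 \<le> 1 - p * q" using p q by (simp add: mult_le_one)
  have one_move: "(\<integral>\<^sup>+xs. ennreal (real (sum_list (drop L (map2 (-) g1 xs)))) \<partial>bs_draws p q g1)
      \<le> ennreal (1 - p * q) * ennreal (real (sum_list (drop L g1)))" for g1
  proof -
    have "drop L (map2 (-) g1 xs) = map2 (-) (drop L g1) (drop L xs)" for xs :: "nat list"
      by (simp add: drop_map drop_zip)
    then have "(\<integral>\<^sup>+xs. ennreal (real (sum_list (drop L (map2 (-) g1 xs)))) \<partial>bs_draws p q g1) =
        (\<integral>\<^sup>+xs. ennreal (real (sum_list (map2 (-) (drop L g1) xs))) \<partial>bs_draws p q (drop L g1))"
      by (simp flip: map_drop_bs_draws)
    also have "\<dots> \<le> ennreal ((1 - p * q) * real (sum_list (drop L g1)))"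
      by (rule nn_integral_bs_draws_remaining_le[OF p q])
    finally show ?thesis using pq by (simp add: ennreal_mult)
  qed
  have "(\<integral>\<^sup>+g'. ennreal (real (sum_list (drop (Suc L) g'))) \<partial>bs_config p q g j)
     = (\<integral>\<^sup>+g1. (\<integral>\<^sup>+xs. ennreal (real (sum_list (drop L (map2 (-) g1 xs)))) \<partial>bs_draws p q g1)
         \<partial>bs_config p q g j')"
    unfolding j by (simp add: bs_next_def)
  also have "\<dots> \<le> ennreal (1 - p * q) * (\<integral>\<^sup>+g1. ennreal (real (sum_list (drop L g1))) \<partial>bs_config p q g j')"
    unfolding nn_integral_pmf_cmult[symmetric] by (rule nn_integral_pmf_mono) (rule one_move)
  also have "\<dots> \<le> ennreal (1 - p * q) * ennreal ((1 - p * q) ^ L * real (sum_list g))"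
    by (rule mult_left_mono[OF Suc.IH[OF L]]) simp
  also have "\<dots> = ennreal ((1 - p * q) ^ Suc L * real (sum_list g))"
    using pq by (simp add: ennreal_mult[symmetric])
  finally show ?case .
qed

section \<open>Concentration of the new piles\<close>

text \<open>If no card lies in a pile older than \<open>D\<close> moves, there are at most \<open>D\<close> nonempty piles, so
  the number of candidates lies between \<open>q N\<close> and \<open>q N + D\<close> (\<open>N\<close> cards in total): the mean of
  the new pile is then within a factor \<open>1 + d\<close> of \<open>p q N\<close>.  Otherwise the bound is trivial.\<close>

lemma prob_newpile_deviation_le:
  assumes p: "0 \<le> p" "p \<le> 1" and q: "0 \<le> q" "q \<le> 1" and d: "0 < d" "d \<le> 1" "4 * d \<le> e"
    and R: "R = p * q * real (sum_list g)" "0 < R" and delay: "p * real D \<le> d * R"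
  shows "measure_pmf.prob (binomial_pmf (bs_candidates q g) p) {s. e < \<bar>real s - R\<bar> / R}
     \<le> real (sum_list (drop D g)) + 2 * exp (- (R * d\<^sup>2 / 4))"
proof (cases "sum_list (drop D g) = 0")
  case False
  then have "1 \<le> real (sum_list (drop D g))" by linarith
  moreover have "measure_pmf.prob (binomial_pmf (bs_candidates q g) p) {s. e < \<bar>real s - R\<bar> / R} \<le> 1"
    by (rule measure_pmf.prob_le_1)
  ultimately show ?thesis using exp_ge_zero[of "- (R * d\<^sup>2 / 4)"] by linarith
next
  case True
  define \<mu> where "\<mu> = real (bs_candidates q g) * p"
  have "sum_list (take D g) = sum_list g"
    using True by (metis add.right_neutral append_take_drop_id sum_list_append)
  moreover have "bs_candidates q g = bs_candidates q (take D g)"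
    using bs_candidates_append[of q "take D g" "drop D g"] bs_candidates_eq_0[OF True] by simp
  ultimately have "real (bs_candidates q g) \<le> q * real (sum_list g) + real D"
    using bs_candidates_le[OF q(1), of "take D g"] by simp
  from mult_right_mono[OF this p(1)] have \<mu>_le: "\<mu> \<le> R + d * R"
    using delay unfolding \<mu>_def R(1) by (simp add: algebra_simps)
  have \<mu>_ge: "R \<le> \<mu>"
    unfolding \<mu>_def R using mult_right_mono[OF bs_candidates_ge[OF q(1)] p(1)] by (simp add: algebra_simps)
  have "d * R \<le> R"
    using d R(2) by (simp add: mult_left_le_one_le)
  then have d\<mu>: "d * \<mu> \<le> d * (2 * R)"
    using \<mu>_le d(1) by (intro mult_left_mono) auto
  have dR: "4 * d * R \<le> e * R" using d(3) R(2) by simp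
  have sub: "{s. e < \<bar>real s - R\<bar> / R} \<subseteq> {s. d * \<mu> \<le> \<bar>real s - \<mu>\<bar>}"
  proof (intro subsetI, unfold mem_Collect_eq)
    fix s
    assume "e < \<bar>real s - R\<bar> / R"
    with R(2) have "e * R < \<bar>real s - R\<bar>" by (simp add: less_divide_eq)
    with dR have "4 * d * R < \<bar>real s - R\<bar>" by linarith
    with d\<mu> \<mu>_le \<mu>_ge show "d * \<mu> \<le> \<bar>real s - \<mu>\<bar>" by arith
  qed
  have "measure_pmf.prob (binomial_pmf (bs_candidates q g) p) {s. e < \<bar>real s - R\<bar> / R}
      \<le> measure_pmf.prob (binomial_pmf (bs_candidates q g) p) {s. d * \<mu> \<le> \<bar>real s - \<mu>\<bar>}"
    by (rule measure_pmf.finite_measure_mono[OF sub]) simp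
  also have "\<dots> \<le> 2 * exp (- (\<mu> * d\<^sup>2 / 4))"
    unfolding \<mu>_def using p d by (intro prob_binomial_relative_deviation_le) auto
  also have "\<dots> \<le> 2 * exp (- (R * d\<^sup>2 / 4))"
    using mult_right_mono[OF \<mu>_ge zero_le_power2[of d]] by simp
  finally show ?thesis by simp
qed

lemma prob_newpile_deviation_bs_newpiles_zeros_le:
  assumes p: "0 \<le> p" "p \<le> 1" and q: "0 \<le> q" "q \<le> 1" and d: "0 < d" "d \<le> 1" "4 * d \<le> e"
    and g: "sum_list g = N" and j: "D \<le> j" "j < m"
    and R: "R = p * q * real N" "0 < R" and delay: "p * real D \<le> d * R"
  shows "measure_pmf.prob (bs_newpiles_zeros p q g m) {ss. e < \<bar>real (ss ! j) - R\<bar> / R}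
     \<le> (1 - p * q) ^ D * real N + 2 * exp (- (R * d\<^sup>2 / 4))"
proof -
  define E where "E = {s::nat. e < \<bar>real s - R\<bar> / R}"
  define B where "B = 2 * exp (- (R * d\<^sup>2 / 4))"
  have pin: "p \<in> {0..1}" using p by simp
  have pq: "0 \<le> 1 - p * q" using p q by (simp add: mult_le_one)
  have "measure_pmf.prob (bs_newpiles_zeros p q g m) {ss. e < \<bar>real (ss ! j) - R\<bar> / R} =
      measure_pmf.prob (map_pmf (\<lambda>ss. ss ! j) (bs_newpiles_zeros p q g m)) E"
    by (simp add: E_def vimage_def)
  also have "\<dots> = measure_pmf.prob (bind_pmf (bs_config p q g j) (\<lambda>g'. binomial_pmf (bs_candidates q g') p)) E"
    by (simp add: nth_bs_newpiles_zeros[OF j(2)] map_sum_list_bs_draws[OF pin])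
  finally have prob_eq: "measure_pmf.prob (bs_newpiles_zeros p q g m) {ss. e < \<bar>real (ss ! j) - R\<bar> / R} =
      measure_pmf.prob (bind_pmf (bs_config p q g j) (\<lambda>g'. binomial_pmf (bs_candidates q g') p)) E" .
  have "emeasure (binomial_pmf (bs_candidates q g') p) E \<le> ennreal (real (sum_list (drop D g'))) + ennreal B"
    if "g' \<in> set_pmf (bs_config p q g j)" for g'
  proof -
    have "sum_list g' = N" using sum_list_bs_config[OF pin q that] g by simp
    then have "measure_pmf.prob (binomial_pmf (bs_candidates q g') p) E \<le> real (sum_list (drop D g')) + B"
      unfolding E_def B_def using R delay by (intro prob_newpile_deviation_le[OF p q d]) auto
    then show ?thesis
      by (simp add: measure_pmf.emeasure_eq_measure B_def ennreal_leI flip: ennreal_plus)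
  qed
  then have "emeasure (bind_pmf (bs_config p q g j) (\<lambda>g'. binomial_pmf (bs_candidates q g') p)) E
      \<le> (\<integral>\<^sup>+g'. ennreal (real (sum_list (drop D g'))) + ennreal B \<partial>bs_config p q g j)"
    by (simp add: nn_integral_pmf_mono)
  also have "\<dots> \<le> ennreal ((1 - p * q) ^ D * real (sum_list g)) + ennreal B"
    unfolding nn_integral_pmf_add nn_integral_pmf_const
    by (intro add_right_mono nn_integral_old_cards_bs_config_le[OF p q j(1)])
  also have "\<dots> = ennreal ((1 - p * q) ^ D * real N + B)"
    using pq g by (simp add: B_def)
  finally have "ennreal (measure_pmf.prob (bs_config p q g j \<bind> (\<lambda>g'. binomial_pmf (bs_candidates q g') p)) E)
      \<le> ennreal ((1 - p * q) ^ D * real N + B)"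
    unfolding measure_pmf.emeasure_eq_measure .
  then show ?thesis
    unfolding prob_eq B_def using pq by (simp add: ennreal_le_iff del: ennreal_plus)
qed

lemma prob_max_newpile_deviation_le:
  assumes p: "0 \<le> p" "p \<le> 1" and q: "0 \<le> q" "q \<le> 1" and d: "0 < d" "d \<le> 1" "4 * d \<le> e"
    and \<alpha>: "sum_list \<alpha> = N" "\<forall>h\<in>set \<alpha>. 0 < h"
    and R: "R = p * q * real N" "0 < R" and delay: "p * real D \<le> d * R" and M: "1 \<le> M"
  shows "measure_pmf.prob (bs_newpiles p q \<alpha> (D + M))
      {ss. Max ((\<lambda>k. \<bar>real (ss ! (k - 1)) - R\<bar> / R) ` {D + 1 .. D + M}) > e}
    \<le> real M * ((1 - p * q) ^ D * real N + 2 * exp (- (R * d\<^sup>2 / 4)))"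
proof -
  let ?A = "\<lambda>k. {ss. e < \<bar>real (ss ! (k - 1)) - R\<bar> / R}"
  have "bs_newpiles p q \<alpha> (D + M) = bs_newpiles_zeros p q \<alpha> (D + M)"
    using bs_newpiles_filter_pos[of p q \<alpha> "D + M"] \<alpha>(2) p by (simp add: filter_id_conv)
  moreover have "{ss. Max ((\<lambda>k. \<bar>real (ss ! (k - 1)) - R\<bar> / R) ` {D + 1 .. D + M}) > e}
      \<subseteq> (\<Union>k\<in>{D + 1 .. D + M}. ?A k)"
    using M by (auto simp: Max_gr_iff)
  ultimately have "measure_pmf.prob (bs_newpiles p q \<alpha> (D + M))
      {ss. Max ((\<lambda>k. \<bar>real (ss ! (k - 1)) - R\<bar> / R) ` {D + 1 .. D + M}) > e}
    \<le> measure_pmf.prob (bs_newpiles_zeros p q \<alpha> (D + M)) (\<Union>k\<in>{D + 1 .. D + M}. ?A k)"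
    by (simp add: measure_pmf.finite_measure_mono)
  also have "\<dots> \<le> (\<Sum>k\<in>{D + 1 .. D + M}. measure_pmf.prob (bs_newpiles_zeros p q \<alpha> (D + M)) (?A k))"
    by (rule measure_pmf.finite_measure_subadditive_finite) auto
  also have "\<dots> \<le> (\<Sum>k\<in>{D + 1 .. D + M}. (1 - p * q) ^ D * real N + 2 * exp (- (R * d\<^sup>2 / 4)))"
    using R delay
    by (intro sum_mono prob_newpile_deviation_bs_newpiles_zeros_le[OF p q d \<alpha>(1)]) auto
  finally show ?thesis by simp
qed

section \<open>The choice of D and M\<close>

lemma delay_term_le:
  fixes P Q d L :: real and N :: nat
  assumes P: "0 < P" "P \<le> 1" and Q: "0 < Q" "Q \<le> 1" and d: "0 < d" "d \<le> 1/4"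
    and L: "1 \<le> L" and big: "16 / d\<^sup>2 * L \<le> P * Q\<^sup>2 * real N"
  shows "P * real (nat \<lceil>14 * L / (P * Q)\<rceil>) \<le> d * (P * Q * real N)"
proof -
  define Y where "Y = P * Q\<^sup>2 * real N"
  have "16 * L \<le> d\<^sup>2 * Y" using big d by (simp add: Y_def field_simps)
  also have "\<dots> \<le> (d / 4) * Y"
    using d P by (intro mult_right_mono) (auto simp: Y_def power2_eq_square)
  finally have Y: "64 * L \<le> d * Y" by simp
  have "Y \<le> Q * real N"
    using mult_right_mono[OF mult_le_one[of P Q], of "Q * real N"] P Q
    by (simp add: Y_def power2_eq_square algebra_simps)
  with d have "d * Y \<le> d * (Q * real N)" by simp
  with Y L have QN: "2 \<le> d * (Q * real N)" by linarith
  have "P * real (nat \<lceil>14 * L / (P * Q)\<rceil>) \<le> P * (14 * L / (P * Q) + 1)"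
    using P Q L by (intro mult_left_mono) (auto simp: of_nat_nat)
  also have "\<dots> = 14 * L / Q + P" using P Q by (simp add: field_simps)
  also have "\<dots> \<le> d * (P * Q * real N) / 2 + d * (P * Q * real N) / 2"
  proof (rule add_mono)
    show "14 * L / Q \<le> d * (P * Q * real N) / 2"
      using Y L Q by (simp add: Y_def divide_le_eq power2_eq_square field_simps)
    show "P \<le> d * (P * Q * real N) / 2"
      using mult_left_mono[OF QN, of P] P by (simp add: algebra_simps)
  qed
  finally show ?thesis by (simp add: mult_ac)
qed

lemma nat_ceiling_square_div_le:
  fixes P :: real and N :: nat
  assumes "0 < P" "1 \<le> P * real N"
  shows "real (nat \<lceil>(real N)\<^sup>2 / P\<rceil>) \<le> 2 * real N ^ 3"
proof -
  have N: "1 \<le> real N"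
    using assms by (cases N) auto
  have "(real N)\<^sup>2 \<le> real N ^ 3 * P"
    using mult_left_mono[OF assms(2), of "(real N)\<^sup>2"] by (simp add: power2_eq_square power3_eq_cube algebra_simps)
  then have "(real N)\<^sup>2 / P \<le> real N ^ 3" using assms(1) by (simp add: divide_le_eq)
  moreover have "1 \<le> real N ^ 3" using N by simp
  moreover have "real (nat \<lceil>(real N)\<^sup>2 / P\<rceil>) \<le> (real N)\<^sup>2 / P + 1"
    using assms(1) by (simp add: of_nat_nat)
  ultimately show ?thesis by linarith
qed

lemma error_term_le:
  fixes P Q d :: real and N :: nat
  assumes P: "0 < P" "P \<le> 1" and Q: "0 < Q" "Q \<le> 1" and d: "0 < d"
    and N: "1 \<le> N" and big: "16 / d\<^sup>2 * ln (real N) \<le> P * Q\<^sup>2 * real N"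
  shows "(1 - P * Q) ^ nat \<lceil>14 * ln (real N) / (P * Q)\<rceil> * real N + 2 * exp (- (P * Q * real N * d\<^sup>2 / 4))
    \<le> 3 / real N ^ 4"
proof -
  define D where "D = nat \<lceil>14 * ln (real N) / (P * Q)\<rceil>"
  have r: "0 < P * Q" "P * Q \<le> 1" using P Q by (auto simp: mult_le_one)
  have inverse_power: "exp (- (real k * ln (real N))) = 1 / real N ^ k" for k
    using N by (simp add: exp_minus inverse_eq_divide exp_of_nat_mult)
  have "(1 - P * Q) ^ D \<le> exp (- (P * Q)) ^ D"
    using r exp_ge_add_one_self[of "- (P * Q)"] by (intro power_mono) auto
  also have "\<dots> = exp (- (P * Q * real D))" by (simp add: algebra_simps flip: exp_of_nat_mult)
  also have "\<dots> \<le> exp (- (14 * ln (real N)))"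
    using real_nat_ceiling_ge[of "14 * ln (real N) / (P * Q)"] r
    by (simp add: D_def divide_le_eq mult.commute)
  also have "\<dots> = 1 / real N ^ 14" using inverse_power[of 14] by simp
  finally have "(1 - P * Q) ^ D * real N \<le> 1 / real N ^ 14 * real N"
    by (rule mult_right_mono) simp
  also have "\<dots> = 1 / real N ^ 13"
    using power_add[of "real N" 13 1] N by simp
  finally have first: "(1 - P * Q) ^ D * real N \<le> 1 / real N ^ 13" .
  have "1 / real N ^ 13 \<le> 1 / real N ^ 4"
    using N by (intro divide_left_mono power_increasing) auto
  have "4 * ln (real N) \<le> P * Q\<^sup>2 * real N * d\<^sup>2 / 4"
    using big d by (simp add: field_simps)
  also have "\<dots> \<le> P * Q * real N * d\<^sup>2 / 4"
    using P Q by (intro divide_right_mono mult_right_mono) (auto simp: power2_eq_square mult_right_le_one_le)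
  finally have "exp (- (P * Q * real N * d\<^sup>2 / 4)) \<le> exp (- (4 * ln (real N)))" by simp
  also have "\<dots> = 1 / real N ^ 4" using inverse_power[of 4] by simp
  finally show ?thesis using first \<open>1 / real N ^ 13 \<le> 1 / real N ^ 4\<close> unfolding D_def by simp
qed

lemma prob_max_newpile_deviation_le_inverse:
  fixes P Q d e :: real and N :: nat
  assumes P: "0 < P" "P \<le> 1" and Q: "0 < Q" "Q \<le> 1" and d: "0 < d" "d \<le> 1/4" "4 * d \<le> e"
    and N: "3 \<le> N" and big: "16 / d\<^sup>2 * ln (real N) \<le> P * Q\<^sup>2 * real N"
    and \<alpha>: "sum_list \<alpha> = N" "\<forall>h\<in>set \<alpha>. 0 < h"
  shows "(let D = nat \<lceil>14 * ln (real N) / (P * Q)\<rceil>;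
              M = nat \<lceil>(real N)\<^sup>2 / P\<rceil>
          in measure_pmf.prob (bs_newpiles P Q \<alpha> (D + M))
               {ss. Max ((\<lambda>k. \<bar>real (ss ! (k - 1)) - P * Q * real N\<bar> / (P * Q * real N))
                         ` {D + 1 .. D + M}) > e}) \<le> 6 / real N"
proof -
  define D where "D = nat \<lceil>14 * ln (real N) / (P * Q)\<rceil>"
  define M where "M = nat \<lceil>(real N)\<^sup>2 / P\<rceil>"
  define R where "R = P * Q * real N"
  have L: "1 \<le> ln (real N)"
    using N exp_le by (simp add: ln_ge_iff)
  have "16 * 1 \<le> 16 / d\<^sup>2 * ln (real N)"
    using d L power_mono[of d "1/4" 2] by (intro mult_mono) (auto simp: field_simps)
  also have "\<dots> \<le> P * Q\<^sup>2 * real N"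
    by (rule big)
  also have "\<dots> \<le> P * 1 * real N"
    using P Q by (intro mult_right_mono mult_left_mono power_le_one) auto
  finally have PN: "1 \<le> P * real N" by simp
  have "measure_pmf.prob (bs_newpiles P Q \<alpha> (D + M))
      {ss. Max ((\<lambda>k. \<bar>real (ss ! (k - 1)) - R\<bar> / R) ` {D + 1 .. D + M}) > e}
    \<le> real M * ((1 - P * Q) ^ D * real N + 2 * exp (- (R * d\<^sup>2 / 4)))"
  proof (rule prob_max_newpile_deviation_le[OF _ _ _ _ _ _ d(3) \<alpha> R_def])
    show "P * real D \<le> d * R"
      unfolding D_def R_def using delay_term_le[OF P Q d(1,2) L big] .
    have "0 < (real N)\<^sup>2 / P" using P N by simp
    then show "1 \<le> M" unfolding M_def by linarith
  qed (use P Q d N in \<open>auto simp: R_def\<close>)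
  also have "\<dots> \<le> (2 * real N ^ 3) * (3 / real N ^ 4)"
  proof (rule mult_mono)
    show "real M \<le> 2 * real N ^ 3"
      unfolding M_def using nat_ceiling_square_div_le[OF P(1) PN] .
    show "(1 - P * Q) ^ D * real N + 2 * exp (- (R * d\<^sup>2 / 4)) \<le> 3 / real N ^ 4"
      unfolding D_def R_def using error_term_le[OF P Q d(1) _ big] N by simp
    have "0 \<le> 1 - P * Q" using P Q by (simp add: mult_le_one)
    then show "0 \<le> (1 - P * Q) ^ D * real N + 2 * exp (- (R * d\<^sup>2 / 4))"
      by (simp add: add_nonneg_nonneg)
  qed simp
  also have "\<dots> = 6 / real N"
    using power_add[of "real N" 3 1] N by simp
  finally show ?thesis
    unfolding Let_def D_def M_def R_def .
qed

theorem lemma6: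
  fixes p q :: "nat \<Rightarrow> real" and \<alpha>0 :: "nat \<Rightarrow> nat list"
  assumes pq: "\<And>n. 0 < p n \<and> p n \<le> 1 \<and> 0 < q n \<and> q n \<le> 1"
    and lim: "filterlim (\<lambda>n. p n * (q n)\<^sup>2 * real n / ln (real n)) at_top sequentially"
    and init: "\<And>n. sum_list (\<alpha>0 n) = n \<and> (\<forall>h\<in>set (\<alpha>0 n). 0 < h)"
  shows "\<And>\<epsilon>::real. \<epsilon> > 0 \<Longrightarrow>
    (\<lambda>n. let D = nat \<lceil>14 * ln (real n) / (p n * q n)\<rceil>;
              M = nat \<lceil>(real n)\<^sup>2 / p n\<rceil>
          in measure_pmf.prob (bs_newpiles (p n) (q n) (\<alpha>0 n) (D + M))
               {ss. Max ((\<lambda>k. \<bar>real (ss ! (k - 1)) - p n * q n * real n\<bar> / (p n * q n * real n))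
                         ` {D + 1 .. D + M}) > \<epsilon>})
    \<longlonglongrightarrow> 0"
  apply (rule tendsto_sandwich[OF _ _ tendsto_const lim_const_over_n[of 6]])
  subgoal by (simp add: Let_def)
  subgoal premises \<epsilon> for \<epsilon>
  proof -
    define d where "d = min \<epsilon> 1 / 4"
    have d: "0 < d" "d \<le> 1/4" "4 * d \<le> \<epsilon>" using \<epsilon> by (auto simp: d_def)
    have "\<forall>\<^sub>F n in sequentially. 3 \<le> n \<and> 16 / d\<^sup>2 \<le> p n * (q n)\<^sup>2 * real n / ln (real n)"
      using lim by (auto simp: filterlim_at_top eventually_conj eventually_ge_at_top)
    then show ?thesis
    proof (rule eventually_mono, intro prob_max_newpile_deviation_le_inverse d)
      fix n :: nat
      assume n: "3 \<le> n \<and> 16 / d\<^sup>2 \<le> p n * (q n)\<^sup>2 * real n / ln (real n)"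
      moreover have "0 < ln (real n)" using n by simp
      ultimately show "16 / d\<^sup>2 * ln (real n) \<le> p n * (q n)\<^sup>2 * real n"
        by (simp add: le_divide_eq)
    qed (use pq init d in auto)
  qed
  done

end
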